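(* Let $\alpha>\beta\geq 1$ be two real numbers such that $\alpha/\beta\notin\mathbb{N}$ and $[\alpha,\beta]\le 1$. Then $\mathcal{N}_\alpha\cap\mathcal{N}_\beta= \emptyset$.
   Context: Height: for irrational $\rho>0$, $H(\rho)=\infty$; for $\rho=a/q$ with $a,q\in\mathbb{N}$, $\gcd(a,q)=1$, $H(\rho)=\max\{a,q\}$. Bracket: $[\alpha,\beta]=H(\alpha/\beta)/\max\{\alpha,\beta\}$. $P^-(n)$ denotes the smallest prime factor of $n\in\mathbb{N}$, with $P^-(1)=\infty$. For $\alpha\ge1$, $\mathcal{N}_\alpha=\bigcup_{n\in\mathbb{N},\ P^-(n)>\alpha}(n\alpha-\tfrac12,n\alpha+\tfrac12)$. *)

theory Defs
  imports "HOL-Analysis.Analysis" "HOL-Computational_Algebra.Primes"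
begin

definition height :: "real \<Rightarrow> ereal" where
  "height \<rho> =
     (if \<exists>a q::nat. a > 0 \<and> q > 0 \<and> coprime a q \<and> \<rho> = real a / real q
      then ereal (real (THE m. \<exists>a q::nat. a > 0 \<and> q > 0 \<and> coprime a q \<and>
                                  \<rho> = real a / real q \<and> m = max a q))
      else \<infinity>)"

definition bracket :: "real \<Rightarrow> real \<Rightarrow> ereal" where
  "bracket \<alpha> \<beta> = height (\<alpha> / \<beta>) / ereal (max \<alpha> \<beta>)"

definition min_prime_factor :: "nat \<Rightarrow> ereal" where
  "min_prime_factor n = (if n = 1 then \<infinity> else ereal (real (Min (prime_factors n))))"

definition NN :: "real \<Rightarrow> real set" where
  "NN \<alpha> = (\<Union>n\<in>{n::nat. n \<ge> 1 \<and> min_prime_factor n > ereal \<alpha>}.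
               {real n * \<alpha> - 1/2 <..< real n * \<alpha> + 1/2})"

end

theory Submission
  imports Defs
begin

text \<open>Write \<open>\<alpha>/\<beta> = a/q\<close> in lowest terms. The bracket condition says \<open>max a q \<le> \<alpha>\<close>, and
  \<open>\<alpha>/\<beta> \<notin> \<nat>\<close> says \<open>q \<ge> 2\<close>. Since \<open>a (n\<alpha> - m\<beta>) = \<alpha> (na - mq)\<close> and \<open>\<alpha> \<ge> a\<close>, two points
  \<open>n\<alpha>\<close>, \<open>m\<beta>\<close> at distance less than 1 satisfy \<open>na = mq\<close>, so \<open>q\<close> divides \<open>n\<close> and \<open>n\<close> has a
  prime factor \<open>\<le> q \<le> \<alpha>\<close>; hence the two families of intervals never meet.\<close>

lemma coprime_fraction_unique:
  fixes a q a' q' :: nat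
  assumes "q > 0" "q' > 0" "coprime a q" "coprime a' q'"
    and "real a / real q = real a' / real q'"
  shows "a = a' \<and> q = q'"
proof -
  have cross: "a * q' = a' * q"
    using assms by (simp add: field_simps flip: of_nat_mult)
  have "a dvd a'" "a' dvd a"
    using cross assms(3,4) by (metis coprime_dvd_mult_left_iff dvd_triv_left)+
  moreover have "q dvd q'" "q' dvd q"
    using cross assms(3,4)
    by (metis coprime_commute coprime_dvd_mult_left_iff dvd_triv_right mult.commute)+
  ultimately show ?thesis by (simp add: dvd_antisym)
qed

lemma height_coprime_fraction:
  fixes a q :: nat
  assumes "a > 0" "q > 0" "coprime a q"
  shows "height (real a / real q) = ereal (real (max a q))"
proof -
  have "(THE m. \<exists>a' q'::nat. a' > 0 \<and> q' > 0 \<and> coprime a' q' \<and>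
            real a / real q = real a' / real q' \<and> m = max a' q') = max a q"
    using assms coprime_fraction_unique[of q _ a] by (rule_tac the_equality) auto
  then show ?thesis
    unfolding height_def using assms by auto
qed

lemma bracket_le_1_obtain_fraction:
  fixes \<alpha> \<beta> :: real
  assumes "0 < \<beta>" "\<beta> < \<alpha>" "bracket \<alpha> \<beta> \<le> 1"
  obtains a q :: nat
  where "a > 0" "q > 0" "coprime a q" "\<alpha> / \<beta> = real a / real q" "real (max a q) \<le> \<alpha>"
proof -
  have "\<exists>a q::nat. a > 0 \<and> q > 0 \<and> coprime a q \<and> \<alpha> / \<beta> = real a / real q"
  proof (rule ccontr)
    assume "\<not> ?thesis"
    then have "bracket \<alpha> \<beta> = \<infinity>"
      unfolding bracket_def height_def using assms by simp
    then show False using assms(3) by simp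
  qed
  then obtain a q :: nat where aq: "a > 0" "q > 0" "coprime a q" "\<alpha> / \<beta> = real a / real q"
    by blast
  then have "bracket \<alpha> \<beta> = ereal (real (max a q) / \<alpha>)"
    unfolding bracket_def using assms height_coprime_fraction[of a q] by simp
  then have "real (max a q) \<le> \<alpha>"
    using assms by (simp add: divide_le_eq)
  with aq that show ?thesis by blast
qed

lemma min_prime_factor_le_divisor:
  fixes n q :: nat
  assumes "n > 0" "q dvd n" "q \<noteq> 1"
  shows "min_prime_factor n \<le> ereal (real q)"
proof -
  have "q > 0" using assms by auto
  then obtain p where p: "prime p" "p dvd q"
    using assms(3) prime_factor_nat by blast
  then have "p \<in> prime_factors n"
    using assms by (simp add: in_prime_factors_iff dvd_trans[OF p(2)])
  then have "Min (prime_factors n) \<le> p" by simp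
  also have "p \<le> q" using p \<open>q > 0\<close> by (simp add: dvd_imp_le)
  finally show ?thesis
    using assms unfolding min_prime_factor_def by auto
qed

lemma mem_NN_iff:
  "x \<in> NN \<alpha> \<longleftrightarrow>
     (\<exists>n::nat. n \<ge> 1 \<and> min_prime_factor n > ereal \<alpha> \<and> \<bar>x - real n * \<alpha>\<bar> < 1/2)"
  unfolding NN_def abs_less_iff by force

lemma close_multiples_eq:
  fixes \<alpha> \<beta> :: real and a q n m :: nat
  assumes "real q * \<alpha> = real a * \<beta>" "a > 0" "real a \<le> \<alpha>"
    and "\<bar>real n * \<alpha> - real m * \<beta>\<bar> < 1"
  shows "n * a = m * q"
proof -
  have "real a * (real n * \<alpha> - real m * \<beta>) = \<alpha> * (real (n * a) - real (m * q))"
    using assms(1) by (simp add: algebra_simps)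
  moreover have "\<bar>real a * (real n * \<alpha> - real m * \<beta>)\<bar> < real a"
    using assms(2,4) by (simp add: abs_mult)
  ultimately have "\<alpha> * \<bar>real (n * a) - real (m * q)\<bar> < real a"
    using assms(2,3) by (simp add: abs_mult)
  then have "\<alpha> * \<bar>real (n * a) - real (m * q)\<bar> < \<alpha>"
    using assms(3) by linarith
  then have "\<bar>real (n * a) - real (m * q)\<bar> < 1"
    using assms by (simp add: mult_less_cancel_left2)
  then show ?thesis by linarith
qed

theorem lemma2p6:
  fixes \<alpha> \<beta> :: real
  assumes "\<alpha> > \<beta>" and "\<beta> \<ge> 1"
    and "\<alpha> / \<beta> \<notin> \<nat>"
    and "bracket \<alpha> \<beta> \<le> 1"
  shows "NN \<alpha> \<inter> NN \<beta> = {}"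
proof (rule ccontr)
  obtain a q :: nat where aq: "a > 0" "q > 0" "coprime a q" "\<alpha> / \<beta> = real a / real q"
    and max_le: "real (max a q) \<le> \<alpha>"
    using assms bracket_le_1_obtain_fraction by (metis less_le_trans zero_less_one)
  have "q \<noteq> 1" using aq(4) assms(3) by auto
  assume "NN \<alpha> \<inter> NN \<beta> \<noteq> {}"
  then obtain x where "x \<in> NN \<alpha>" "x \<in> NN \<beta>" by blast
  then obtain n m :: nat
    where n: "n \<ge> 1" "min_prime_factor n > ereal \<alpha>" "\<bar>x - real n * \<alpha>\<bar> < 1/2"
      and m: "\<bar>x - real m * \<beta>\<bar> < 1/2"
    unfolding mem_NN_iff by blast
  have "n * a = m * q"
  proof (rule close_multiples_eq)
    show "real q * \<alpha> = real a * \<beta>" using aq assms by (simp add: field_simps)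
    show "\<bar>real n * \<alpha> - real m * \<beta>\<bar> < 1" using n(3) m by linarith
  qed (use aq max_le in auto)
  then have "q dvd n"
    using aq(3) by (metis coprime_commute coprime_dvd_mult_left_iff dvd_triv_right)
  then have "min_prime_factor n \<le> ereal (real q)"
    using n(1) \<open>q \<noteq> 1\<close> by (simp add: min_prime_factor_le_divisor)
  also have "\<dots> \<le> ereal \<alpha>" using max_le by simp
  finally show False using n(2) by simp
qed

end
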